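(* Let $G$ be a $3$-dimensional Lie group with Lie algebra $\mathfrak g$ and $(\mathcal G,\mathcal F)$ a left-invariant $B_3$-generalized pseudo-Kähler structure on a left-invariant Courant algebroid $E_{H,F}$ of type $B_3$ over $G$, with components $(g,J_+,J_-,X_+,X_-)$ where $g$ is positive definite. Then $H=0$, $F=0$, $J_\pm$ are $g$-skew-symmetric with $J_\pm X_\pm=0$ and complex structures on $X_\pm^\perp$, and, after replacing $(g,J_+,J_-,X_+,X_-)$ by $(\mu^2g,J_+,J_-,\mu^{-1}X_+,\mu^{-1}X_-)$ for a suitable $\mu\in\mathbb R\setminus\{0\}$, one of the following holds: (i) there is a $g$-orthonormal basis $\{w_1,w_2,w_3\}$ of $\mathfrak g$ with $[w_1,w_2]=w_3$, $[w_2,w_3]=w_1$, $[w_3,w_1]=0$, and $X_-=w_2$, $X_+=\pm X_-$; (ii) there is a $g$-orthogonal basis $\{w_1,w_2,w_3\}$ with $[w_1,w_2]=w_2$, $[w_1,w_3]=[w_2,w_3]=0$, $g(w_1,w_1)=1/\delta^2$, $g(w_2,w_2)=g(w_3,w_3)=1$ for some $\delta\in\mathbb R\setminus\{0\}$, and $X_-=w_3$, $X_+=\pm X_-$; (iii) $\mathfrak g$ is abelian, $g$ is any Riemannian metric and $X_\pm$ are arbitrary unit vectors.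
   Context: For a closed $2$-form $F$ and a $3$-form $H$ on a manifold $M$ of dimension $n$ with $dH=-F\wedge F$, $E_{H,F}$ is $TM\oplus T^*M\oplus\mathbb R$ with scalar product $\langle X+\xi+\lambda,Y+\eta+\mu\rangle=\tfrac12(\eta(X)+\xi(Y))+\lambda\mu$, anchor the projection to $TM$, and Dorfman bracket $[X+\xi+\lambda,Y+\eta+\mu]=\mathcal L_XY+\mathcal L_X\eta-i_Yd\xi+2\mu\,d\lambda+i_Xi_YH-2(\mu\,i_XF-\lambda\,i_YF)+X(\mu)-Y(\lambda)+F(X,Y)$. A $B_n$-generalized almost pseudo-Hermitian structure $(\mathcal G,\mathcal F)$ consists of a generalized metric (rank $n$ subbundle $E_-$, nondegenerate for the scalar product, projecting isomorphically to $TM$, $\mathcal G^{\mathrm{end}}=\pm\mathrm{Id}$ on $E_\pm$, $E_+=E_-^\perp$) and an endomorphism $\mathcal F$ commuting with $\mathcal G^{\mathrm{end}}$ whose $i$-eigenbundle $L\subset E\otimes\mathbb C$ is isotropic of rank $n$ with $L\cap\bar L=0$, $-i$-eigenbundle $\bar L$ and kernel $(L\oplus\bar L)^\perp$. It is $B_n$-generalized pseudo-Kähler if the $i$-eigenbundles of $\mathcal F$ and $\mathcal G^{\mathrm{end}}\mathcal F$ have spaces of sections closed under the Dorfman bracket. Components ($n$ odd): data $(g,J_+,J_-,X_+,X_-)$ with $g$ pseudo-Riemannian, $J_\pm$ $g$-skew-symmetric, $g(X_\pm,X_\pm)=1$, $J_\pm X_\pm=0$, $J_\pm|_{X_\pm^\perp}$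 complex structures; the structure with these components has $E_-=\{X-g(X,\cdot)\}$ and $\mathcal F(X+\xi+\lambda)=[\tfrac12(J_++J_-)X+\tfrac12(J_+-J_-)\xi^\sharp+\lambda X_+]+[\tfrac12g((J_+-J_-)X,\cdot)-\tfrac12\xi\circ(J_++J_-)+\lambda g(X_+,\cdot)]+[-\tfrac12g(X_+,X)-\tfrac12\xi(X_+)]$. Left-invariance: $E_{H,F}$ is left-invariant if $H,F$ are left-invariant; a structure is left-invariant if it is given by left-invariant components, identified with tensors on $\mathfrak g$. The rescaling (replacing $g,X_\pm$ as stated) maps a $B_3$-generalized pseudo-Kähler structure on $E_{H,F}$ to one on $E_{\mu^2H,\mu F}$. *)

theory Defs
  imports "HOL-Analysis.Analysis"
begin

text \<open>Everything is left-invariant, hence identified with linear-algebraic data on the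
Lie algebra g = real^3 (a basis of left-invariant vector fields identifies g with real^3).
Covectors on g are represented by their component vectors: xi(X) = xi \<bullet> X.
A metric g is represented by its symmetric Gram matrix G: g(X,Y) = X \<bullet> (G *v Y);
endomorphisms J by matrices.\<close>

type_synonym vec3 = "real^3"
type_synonym mat3 = "real^3^3"
text \<open>Left-invariant sections of E = TM + T*M + R: triples (X, xi, lambda).\<close>
type_synonym sec = "vec3 \<times> vec3 \<times> real"

definition lie_algebra :: "(vec3 \<Rightarrow> vec3 \<Rightarrow> vec3) \<Rightarrow> bool" where
  "lie_algebra br \<longleftrightarrow> bilinear br \<and> (\<forall>x. br x x = 0) \<and>
     (\<forall>x y z. br x (br y z) + br y (br z x) + br z (br x y) = 0)"

definition abelian :: "(vec3 \<Rightarrow> vec3 \<Rightarrow> vec3) \<Rightarrow> bool" where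
  "abelian br \<longleftrightarrow> (\<forall>x y. br x y = 0)"

definition covec :: "(vec3 \<Rightarrow> real) \<Rightarrow> vec3" where
  "covec f = (\<chi> k. f (axis k 1))"

definition trilinear :: "(vec3 \<Rightarrow> vec3 \<Rightarrow> vec3 \<Rightarrow> real) \<Rightarrow> bool" where
  "trilinear H \<longleftrightarrow> (\<forall>y z. linear (\<lambda>x. H x y z)) \<and> (\<forall>x z. linear (\<lambda>y. H x y z))
      \<and> (\<forall>x y. linear (\<lambda>z. H x y z))"

definition three_form :: "(vec3 \<Rightarrow> vec3 \<Rightarrow> vec3 \<Rightarrow> real) \<Rightarrow> bool" where
  "three_form H \<longleftrightarrow> trilinear H \<and> (\<forall>x y z. H x y z = - H y x z) \<and>
      (\<forall>x y z. H x y z = - H x z y)"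

definition two_form :: "(vec3 \<Rightarrow> vec3 \<Rightarrow> real) \<Rightarrow> bool" where
  "two_form F \<longleftrightarrow> bilinear F \<and> (\<forall>x y. F x y = - F y x)"

text \<open>Exterior derivative of left-invariant forms (Chevalley-Eilenberg formula).\<close>
definition d2 :: "(vec3 \<Rightarrow> vec3 \<Rightarrow> vec3) \<Rightarrow> (vec3 \<Rightarrow> vec3 \<Rightarrow> real) \<Rightarrow> vec3 \<Rightarrow> vec3 \<Rightarrow> vec3 \<Rightarrow> real" where
  "d2 br F x y z = - F (br x y) z + F (br x z) y - F (br y z) x"

definition d3 :: "(vec3 \<Rightarrow> vec3 \<Rightarrow> vec3) \<Rightarrow> (vec3 \<Rightarrow> vec3 \<Rightarrow> vec3 \<Rightarrow> real)
     \<Rightarrow> vec3 \<Rightarrow> vec3 \<Rightarrow> vec3 \<Rightarrow> vec3 \<Rightarrow> real" where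
  "d3 br H a b c e = - H (br a b) c e + H (br a c) b e - H (br a e) b c
                     - H (br b c) a e + H (br b e) a c - H (br c e) a b"

definition wedgeFF :: "(vec3 \<Rightarrow> vec3 \<Rightarrow> real) \<Rightarrow> vec3 \<Rightarrow> vec3 \<Rightarrow> vec3 \<Rightarrow> vec3 \<Rightarrow> real" where
  "wedgeFF F a b c e = 2 * (F a b * F c e - F a c * F b e + F a e * F b c)"

text \<open>Admissible data (H,F) for the Courant algebroid E_{H,F}: F closed, dH = - F ^ F.\<close>
definition courant_data :: "(vec3 \<Rightarrow> vec3 \<Rightarrow> vec3) \<Rightarrow> (vec3 \<Rightarrow> vec3 \<Rightarrow> vec3 \<Rightarrow> real)
     \<Rightarrow> (vec3 \<Rightarrow> vec3 \<Rightarrow> real) \<Rightarrow> bool" where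
  "courant_data br H F \<longleftrightarrow> three_form H \<and> two_form F \<and>
     (\<forall>x y z. d2 br F x y z = 0) \<and>
     (\<forall>a b c e. d3 br H a b c e = - wedgeFF F a b c e)"

text \<open>Dorfman bracket of left-invariant sections of E_{H,F}
  (derivatives of constant functions vanish, d lambda = 0,
   (L_X eta)(Z) = - eta([X,Z]),  (i_Y d xi)(Z) = - xi([Y,Z]),  i_X i_Y H = H(Y,X,.)).\<close>
definition dorfman :: "(vec3 \<Rightarrow> vec3 \<Rightarrow> vec3) \<Rightarrow> (vec3 \<Rightarrow> vec3 \<Rightarrow> vec3 \<Rightarrow> real)
     \<Rightarrow> (vec3 \<Rightarrow> vec3 \<Rightarrow> real) \<Rightarrow> sec \<Rightarrow> sec \<Rightarrow> sec" where
  "dorfman br H F u v = (case u of (X, xi, lam) \<Rightarrow> case v of (Y, eta, mu) \<Rightarrow>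
     (br X Y,
      covec (\<lambda>Z. - (eta \<bullet> br X Z) + xi \<bullet> br Y Z + H Y X Z
                  - 2 * (mu * F X Z - lam * F Y Z)),
      F X Y))"

definition gmet :: "mat3 \<Rightarrow> vec3 \<Rightarrow> vec3 \<Rightarrow> real" where
  "gmet G x y = x \<bullet> (G *v y)"

definition component_data :: "mat3 \<Rightarrow> mat3 \<Rightarrow> mat3 \<Rightarrow> vec3 \<Rightarrow> vec3 \<Rightarrow> bool" where
  "component_data G Jp Jm Xp Xm \<longleftrightarrow>
     transpose G = G \<and> invertible G \<and>
     (\<forall>J\<in>{Jp, Jm}. \<forall>x y. gmet G (J *v x) y = - gmet G x (J *v y)) \<and>
     gmet G Xp Xp = 1 \<and> gmet G Xm Xm = 1 \<and> Jp *v Xp = 0 \<and> Jm *v Xm = 0 \<and>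
     (\<forall>y. gmet G Xp y = 0 \<longrightarrow> Jp *v (Jp *v y) = - y) \<and>
     (\<forall>y. gmet G Xm y = 0 \<longrightarrow> Jm *v (Jm *v y) = - y)"

definition pos_def :: "mat3 \<Rightarrow> bool" where
  "pos_def G \<longleftrightarrow> (\<forall>x. x \<noteq> 0 \<longrightarrow> gmet G x x > 0)"

text \<open>The endomorphism F of the structure with components (g,J+,J-,X+,X-).
  g(X,.) has component vector G *v X, xi^sharp = G^-1 xi, xi o J = J^T xi.\<close>
definition Fend :: "mat3 \<Rightarrow> mat3 \<Rightarrow> mat3 \<Rightarrow> vec3 \<Rightarrow> sec \<Rightarrow> sec" where
  "Fend G Jp Jm Xp u = (case u of (X, xi, lam) \<Rightarrow>
     ((1/2) *\<^sub>R ((Jp + Jm) *v X) + (1/2) *\<^sub>R ((Jp - Jm) *v (matrix_inv G *v xi)) + lam *\<^sub>R Xp,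
      (1/2) *\<^sub>R (G *v ((Jp - Jm) *v X)) - (1/2) *\<^sub>R (transpose (Jp + Jm) *v xi) + lam *\<^sub>R (G *v Xp),
      - (1/2) * gmet G Xp X - (1/2) * (xi \<bullet> Xp)))"

text \<open>G^end of the generalized metric with E_- = {X - g(X,.)}: it is -Id on E_-
  and Id on E_+ = E_-^perp = {X + g(X,.) + lambda}; explicitly
  G^end(X + xi + lambda) = xi^sharp + g(X,.) + lambda.\<close>
definition Gend :: "mat3 \<Rightarrow> sec \<Rightarrow> sec" where
  "Gend G u = (case u of (X, xi, lam) \<Rightarrow> (matrix_inv G *v xi, G *v X, lam))"

text \<open>The i-eigenspace of the complexification of a real endomorphism T consists of
  u1 + i u2 with T u1 = - u2, T u2 = u1. Closure under the (complex-bilinearly extended)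
  Dorfman bracket of left-invariant sections of this eigenbundle:\<close>
definition i_eig_involutive :: "(sec \<Rightarrow> sec) \<Rightarrow> (sec \<Rightarrow> sec \<Rightarrow> sec) \<Rightarrow> bool" where
  "i_eig_involutive T D \<longleftrightarrow> (\<forall>u1 u2 v1 v2.
     T u1 = - u2 \<and> T u2 = u1 \<and> T v1 = - v2 \<and> T v2 = v1 \<longrightarrow>
     (let w1 = D u1 v1 - D u2 v2; w2 = D u1 v2 + D u2 v1 in T w1 = - w2 \<and> T w2 = w1))"

definition gen_pseudo_kaehler :: "(vec3 \<Rightarrow> vec3 \<Rightarrow> vec3) \<Rightarrow> (vec3 \<Rightarrow> vec3 \<Rightarrow> vec3 \<Rightarrow> real)
     \<Rightarrow> (vec3 \<Rightarrow> vec3 \<Rightarrow> real) \<Rightarrow> mat3 \<Rightarrow> mat3 \<Rightarrow> mat3 \<Rightarrow> vec3 \<Rightarrow> bool" where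
  "gen_pseudo_kaehler br H F G Jp Jm Xp \<longleftrightarrow>
     i_eig_involutive (Fend G Jp Jm Xp) (dorfman br H F) \<and>
     i_eig_involutive (Gend G \<circ> Fend G Jp Jm Xp) (dorfman br H F)"

end

theory Submission
  imports Defs
begin

text \<open>On \<open>E\<^sub>+ = {X + g(X,\<cdot>) + \<lambda>}\<close> the endomorphism \<open>\<F>\<close> acts through \<open>J\<^sub>+\<close> (exchanging
  \<open>X\<^sub>+\<close> and \<open>\<lambda>\<close>), on \<open>E\<^sub>- = {X - g(X,\<cdot>)}\<close> through \<open>J\<^sub>-\<close>, and \<open>\<G>\<^sup>e\<^sup>n\<^sup>d \<F> = \<plusminus>\<F>\<close> on
  \<open>E\<^sub>\<plusminus>\<close>. This yields explicit sections spanning the \<open>i\<close>-eigenbundles of \<open>\<F>\<close> and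
  \<open>\<G>\<^sup>e\<^sup>n\<^sup>d \<F>\<close>, and \<open>X\<^sub>- - g(X\<^sub>-,\<cdot>)\<close> spanning their common kernel. Both endomorphisms
  are skew for the scalar product, so closure of an eigenbundle under the Dorfman bracket makes
  brackets of its sections orthogonal to the kernel and compatible with the eigenbundle itself.
  Evaluated on a \<open>g\<close>-orthonormal frame \<open>(f\<^sub>1, J\<^sub>-f\<^sub>1, X\<^sub>-)\<close> with \<open>X\<^sub>+ \<bottom> J\<^sub>-f\<^sub>1\<close>, in which
  \<open>J\<^sub>+\<close> is determined by the coordinates \<open>(\<alpha>, \<beta>)\<close> of \<open>X\<^sub>+\<close> up to a sign \<open>\<sigma>\<close>, these
  conditions become polynomial identities in the structure constants and the components of
  \<open>H\<close> and \<open>F\<close>. Solving them gives \<open>H = F = 0\<close>, \<open>[f\<^sub>1, X\<^sub>-] = \<theta> f\<^sub>2\<close>,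
  \<open>[f\<^sub>2, X\<^sub>-] = -\<theta> f\<^sub>1\<close>, \<open>[f\<^sub>1, f\<^sub>2] = \<kappa> f\<^sub>1 + \<rho> f\<^sub>2\<close>, and \<open>\<alpha> = 0\<close> (i.e.
  \<open>X\<^sub>+ = \<plusminus>X\<^sub>-\<close>) unless the algebra is abelian. By Jacobi \<open>\<theta>\<kappa> = \<theta>\<rho> = 0\<close>, and the
  cases \<open>\<theta> \<noteq> 0\<close>, \<open>\<theta> = 0 \<noteq> (\<kappa>, \<rho>)\<close> and \<open>\<theta> = \<kappa> = \<rho> = 0\<close> are (i), (ii) and (iii).\<close>

lemmas bilinear_simps = bilinear_ladd bilinear_radd bilinear_lsub bilinear_rsub bilinear_lneg
  bilinear_rneg bilinear_lmul bilinear_rmul bilinear_lzero bilinear_rzero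

lemmas matrix_vector_mult_simps = linear_add[OF matrix_vector_mul_linear]
  linear_diff[OF matrix_vector_mul_linear] linear_neg[OF matrix_vector_mul_linear]
  linear_scale[OF matrix_vector_mul_linear] linear_0[OF matrix_vector_mul_linear]

lemma trilinear_bilinear:
  assumes "trilinear H"
  shows "bilinear (\<lambda>x y. H x y z)" "bilinear (H x)"
  using assms unfolding trilinear_def bilinear_def by auto

lemma bilinear_gmet: "bilinear (gmet G)"
  by (simp add: bilinear_def linear_iff gmet_def inner_add_left algebra_simps)

lemmas gmet_simps = bilinear_simps[OF bilinear_gmet]

lemma gmet_sym:
  assumes "transpose G = G"
  shows "gmet G x y = gmet G y x"
proof -
  have "x \<bullet> (G *v y) = (transpose G *v x) \<bullet> y"
    by (simp add: dot_lmul_matrix)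
  then show ?thesis
    unfolding gmet_def using assms by (simp add: inner_commute)
qed

lemma gmet_scaleR_matrix: "gmet (r *\<^sub>R G) x y = r * gmet G x y"
  by (simp add: gmet_def flip: scaleR_matrix_vector_assoc)

lemma matrix_inv_mult_cancel:
  fixes A :: "real^'n^'n"
  assumes "invertible A"
  shows "matrix_inv A *v (A *v x) = x" "A *v (matrix_inv A *v x) = x"
proof -
  have "A ** matrix_inv A = mat 1" "matrix_inv A ** A = mat 1"
    using someI_ex[OF assms[unfolded invertible_def]] unfolding matrix_inv_def by auto
  then show "matrix_inv A *v (A *v x) = x" "A *v (matrix_inv A *v x) = x"
    by (simp_all add: matrix_vector_mul_assoc)
qed

lemma transpose_skew_mult:
  assumes skew: "\<And>x y. gmet G (J *v x) y = - gmet G x (J *v y)"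
  shows "transpose J *v (G *v z) = - (G *v (J *v z))"
proof -
  let ?d = "transpose J *v (G *v z) + G *v (J *v z)"
  have "?d \<bullet> (transpose J *v (G *v z)) = (J *v ?d) \<bullet> (G *v z)"
    by (metis dot_lmul_matrix transpose_matrix_vector transpose_transpose)
  also have "\<dots> = - (?d \<bullet> (G *v (J *v z)))"
    using skew[of ?d z] by (simp add: gmet_def)
  finally have "?d \<bullet> ?d = 0"
    by (simp add: inner_add_right)
  then show ?thesis
    by (simp add: eq_neg_iff_add_eq_0)
qed

lemma gmet_orthonormal_expansion:
  fixes e1 e2 e3 :: vec3
  assumes sym: "transpose G = G"
    and "gmet G e1 e1 = 1" "gmet G e2 e2 = 1" "gmet G e3 e3 = 1"
    and "gmet G e1 e2 = 0" "gmet G e1 e3 = 0" "gmet G e2 e3 = 0"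
  shows "x = gmet G x e1 *\<^sub>R e1 + gmet G x e2 *\<^sub>R e2 + gmet G x e3 *\<^sub>R e3"
proof -
  define comb where "comb c = c$1 *\<^sub>R e1 + c$2 *\<^sub>R e2 + c$3 *\<^sub>R e3" for c :: vec3
  have "gmet G e2 e1 = 0" "gmet G e3 e1 = 0" "gmet G e3 e2 = 0"
    using assms gmet_sym[OF sym] by metis+
  then have coeff: "gmet G (comb c) e1 = c$1" "gmet G (comb c) e2 = c$2"
    "gmet G (comb c) e3 = c$3" for c
    using assms by (simp_all add: comb_def gmet_simps)
  have "inj comb"
  proof (rule injI)
    fix c d assume "comb c = comb d"
    then have "c$1 = d$1" "c$2 = d$2" "c$3 = d$3"
      using coeff[of c] coeff[of d] by metis+
    then show "c = d"
      by (simp add: vec_eq_iff forall_3)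
  qed
  moreover have "linear comb"
    by (simp add: linear_iff comb_def algebra_simps)
  ultimately obtain c where "x = comb c"
    using linear_inj_imp_surj by (metis surjD)
  then show ?thesis
    using coeff by (simp add: comb_def)
qed

text \<open>\<open>field_simps\<close> clears denominators in \<open>real^'n\<close> by ring multiplication with \<open>2\<close>;
  this turns it back into a scalar multiple, to which \<open>matrix_vector_mult_simps\<close> apply.\<close>

lemma vec_mult_2: "(v::real^'n) * 2 = 2 *\<^sub>R v"
  by (simp add: vec_eq_iff)

lemma covec_inner:
  assumes "linear f"
  shows "covec f \<bullet> z = f z"
proof -
  have "f z = f (\<Sum>i\<in>UNIV. z$i *\<^sub>R axis i 1)"
    using basis_expansion[of z] by (simp add: scalar_mult_eq_scaleR)
  also have "\<dots> = (\<Sum>i\<in>UNIV. z$i * f (axis i 1))"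
    by (simp add: linear_sum[OF assms] linear_scale[OF assms])
  finally show ?thesis
    by (simp add: covec_def inner_vec_def mult.commute)
qed

definition pairing :: "sec \<Rightarrow> sec \<Rightarrow> real" where
  "pairing u v = (case u of (X, \<xi>, l) \<Rightarrow> case v of (Y, \<eta>, m) \<Rightarrow>
     (1/2) * (\<eta> \<bullet> X + \<xi> \<bullet> Y) + l * m)"

lemma bilinear_pairing: "bilinear pairing"
  unfolding bilinear_def linear_iff pairing_def
  by (auto split: prod.split simp: inner_add_left inner_add_right add_divide_distrib algebra_simps)

lemmas pairing_simps = bilinear_simps[OF bilinear_pairing]

text \<open>\<open>w\<^sub>1 + i w\<^sub>2\<close> is the bracket of \<open>u\<^sub>1 + i u\<^sub>2\<close> and \<open>v\<^sub>1 + i v\<^sub>2\<close>; once it lies in the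
  \<open>i\<close>-eigenspace, skewness of \<open>T\<close> forces these relations against \<open>i\<close>-eigenvectors
  \<open>n\<^sub>1 + i n\<^sub>2\<close> and the kernel.\<close>

lemma i_eig_involutive_skew:
  assumes inv: "i_eig_involutive T D" and "bilinear B"
    and skew: "\<And>a b. B (T a) b = - B a (T b)"
    and "T u1 = - u2" "T u2 = u1" "T v1 = - v2" "T v2 = v1"
  defines "w1 \<equiv> D u1 v1 - D u2 v2" and "w2 \<equiv> D u1 v2 + D u2 v1"
  shows "\<And>n1 n2. T n1 = - n2 \<Longrightarrow> T n2 = n1 \<Longrightarrow> B w1 n1 = B w2 n2 \<and> B w1 n2 = - B w2 n1"
    and "\<And>k. T k = 0 \<Longrightarrow> B w1 k = 0 \<and> B w2 k = 0"
proof -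
  have w: "T w1 = - w2" "T w2 = w1"
    using inv assms(4-7) unfolding i_eig_involutive_def Let_def w1_def w2_def by blast+
  have B_neg: "B x (- y) = - B x y" "B (- x) y = - B x y" "B x 0 = 0" for x y
    using \<open>bilinear B\<close> by (simp_all add: bilinear_lneg bilinear_rneg bilinear_rzero)
  have B_w1: "B w1 n = - B w2 (T n)" and B_w2: "B w2 n = B w1 (T n)" for n
    using skew[of w2 n] skew[of w1 n] by (simp_all only: w B_neg minus_minus neg_equal_iff_equal)
  show "B w1 n1 = B w2 n2 \<and> B w1 n2 = - B w2 n1" if "T n1 = - n2" "T n2 = n1" for n1 n2
    using B_w1[of n1] B_w1[of n2] B_neg(1)[of w2] unfolding that by simp
  show "B w1 k = 0 \<and> B w2 k = 0" if "T k = 0" for k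
    using B_w1[of k] B_w2[of k] B_neg(3) unfolding that by simp
qed

section \<open>Left-invariant generalized pseudo-Kaehler structures\<close>

locale gpk_structure =
  fixes br :: "vec3 \<Rightarrow> vec3 \<Rightarrow> vec3"
    and H :: "vec3 \<Rightarrow> vec3 \<Rightarrow> vec3 \<Rightarrow> real"
    and F :: "vec3 \<Rightarrow> vec3 \<Rightarrow> real"
    and G Jp Jm :: mat3 and Xp Xm :: vec3
  assumes lie: "lie_algebra br"
    and courant: "courant_data br H F"
    and components: "component_data G Jp Jm Xp Xm"
    and pos: "pos_def G"
    and kaehler: "gen_pseudo_kaehler br H F G Jp Jm Xp"
begin

abbreviation "g \<equiv> gmet G"
abbreviation "Fe \<equiv> Fend G Jp Jm Xp"
abbreviation "GFe \<equiv> Gend G \<circ> Fend G Jp Jm Xp"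
abbreviation "dorf \<equiv> dorfman br H F"

lemma G_sym: "transpose G = G"
  and G_invertible: "invertible G"
  and Jp_skew: "g (Jp *v x) y = - g x (Jp *v y)"
  and Jm_skew: "g (Jm *v x) y = - g x (Jm *v y)"
  and Xp_unit: "g Xp Xp = 1" and Xm_unit: "g Xm Xm = 1"
  and Jp_Xp: "Jp *v Xp = 0" and Jm_Xm: "Jm *v Xm = 0"
  and Jp_square_perp: "g Xp y = 0 \<Longrightarrow> Jp *v (Jp *v y) = - y"
  and Jm_square_perp: "g Xm y = 0 \<Longrightarrow> Jm *v (Jm *v y) = - y"
  using components unfolding component_data_def by auto

lemma g_sym: "g x y = g y x"
  using gmet_sym[OF G_sym] .

lemma bilinear_br: "bilinear br"
  using lie unfolding lie_algebra_def by blast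

lemmas br_simps = bilinear_simps[OF bilinear_br]

lemma br_self: "br x x = 0"
  using lie unfolding lie_algebra_def by blast

lemma br_antisym: "br a b = - br b a"
proof -
  have "br (a + b) (a + b) = 0"
    by (rule br_self)
  then have "br a b + br b a = 0"
    using br_self[of a] br_self[of b] by (simp add: br_simps add.commute)
  then show ?thesis
    by (simp add: eq_neg_iff_add_eq_0)
qed

lemma jacobi: "br x (br y z) + br y (br z x) + br z (br x y) = 0"
  using lie unfolding lie_algebra_def by blast

lemma bilinear_F: "bilinear F" and F_antisym: "F x y = - F y x"
  using courant unfolding courant_data_def two_form_def by blast+

lemmas F_simps = bilinear_simps[OF bilinear_F]

lemma F_self: "F x x = 0"
  using F_antisym[of x x] by simp

lemma trilinear_H: "trilinear H"
  and H_antisym: "H x y z = - H y x z" "H x y z = - H x z y"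
  using courant unfolding courant_data_def three_form_def by blast+

lemmas H_simps = bilinear_simps[OF trilinear_bilinear(1)[OF trilinear_H]]
  bilinear_simps[OF trilinear_bilinear(2)[OF trilinear_H]]

lemma H_alternating: "H x x z = 0" "H x z z = 0" "H x z x = 0"
proof -
  show "H x x z = 0" and "H x z z = 0"
    using H_antisym(1)[of x x z] H_antisym(2)[of x z z] by simp_all
  show "H x z x = 0"
    using H_antisym(2)[of x z x] H_antisym(1)[of x x z] by simp
qed

lemma inv_G_cancel: "matrix_inv G *v (G *v z) = z" "G *v (matrix_inv G *v z) = z"
  using matrix_inv_mult_cancel[OF G_invertible] by blast+

text \<open>Writing the covector part as \<open>G *v a\<close> (i.e. as \<open>g(a,\<cdot>)\<close>) turns \<open>Fe\<close>, \<open>GFe\<close> and the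
  pairing into expressions in \<open>g\<close>, \<open>J\<^sub>\<plusminus>\<close> and \<open>X\<^sub>+\<close> only.\<close>

lemma section_Gcoord: "\<exists>a. u = (fst u, G *v a, snd (snd u))"
  by (metis inv_G_cancel(2) prod.collapse)

lemma Fe_Gcoord: "Fe (X, G *v a, l) =
   ((1/2) *\<^sub>R (Jp *v X + Jm *v X) + (1/2) *\<^sub>R (Jp *v a - Jm *v a) + l *\<^sub>R Xp,
    G *v ((1/2) *\<^sub>R (Jp *v X - Jm *v X) + (1/2) *\<^sub>R (Jp *v a + Jm *v a) + l *\<^sub>R Xp),
    - (1/2) * g Xp X - (1/2) * g Xp a)"
proof -
  have "(G *v a) v* Jp = - (G *v (Jp *v a))" "(G *v a) v* Jm = - (G *v (Jm *v a))"
    using transpose_skew_mult[OF Jp_skew, of a] transpose_skew_mult[OF Jm_skew, of a] by simp_all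
  moreover have "(G *v a) \<bullet> Xp = g Xp a"
    by (simp add: gmet_def inner_commute)
  ultimately show ?thesis
    by (simp add: Fend_def inv_G_cancel vector_matrix_mult_add_rdistrib matrix_vector_mult_simps
        algebra_simps)
qed

lemma GFe_Gcoord: "GFe (X, G *v a, l) =
   ((1/2) *\<^sub>R (Jp *v X - Jm *v X) + (1/2) *\<^sub>R (Jp *v a + Jm *v a) + l *\<^sub>R Xp,
    G *v ((1/2) *\<^sub>R (Jp *v X + Jm *v X) + (1/2) *\<^sub>R (Jp *v a - Jm *v a) + l *\<^sub>R Xp),
    - (1/2) * g Xp X - (1/2) * g Xp a)"
  by (simp add: Fe_Gcoord Gend_def inv_G_cancel)

lemma pairing_Gcoord:
  "pairing (X, G *v a, l) (Y, G *v b, m) = (1/2) * (g X b + g a Y) + l * m"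
proof -
  have "Y \<bullet> (G *v a) = a \<bullet> (G *v Y)"
    using g_sym[of Y a] by (simp add: gmet_def)
  then show ?thesis
    by (simp add: pairing_def gmet_def inner_commute)
qed

lemma Fe_skew: "pairing (Fe u) v = - pairing u (Fe v)"
  and GFe_skew: "pairing (GFe u) v = - pairing u (GFe v)"
proof -
  have J_skew_right: "g x (Jp *v y) = - g (Jp *v x) y" "g x (Jm *v y) = - g (Jm *v x) y" for x y
    by (simp_all add: Jp_skew Jm_skew)
  have "pairing (Fe (X, G *v a, l)) (Y, G *v b, m) = - pairing (X, G *v a, l) (Fe (Y, G *v b, m))"
    "pairing (GFe (X, G *v a, l)) (Y, G *v b, m) = - pairing (X, G *v a, l) (GFe (Y, G *v b, m))"
    for X a l Y b m
    unfolding Fe_Gcoord GFe_Gcoord pairing_Gcoord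
    using g_sym[of X Xp] g_sym[of a Xp] g_sym[of Y Xp] g_sym[of b Xp]
    by (simp_all add: gmet_simps J_skew_right algebra_simps)
  then show "pairing (Fe u) v = - pairing u (Fe v)" "pairing (GFe u) v = - pairing u (GFe v)"
    by (metis section_Gcoord)+
qed

lemma pairing_dorfman_Gcoord:
  "pairing (dorf (X, G *v a, l) (Y, G *v b, m)) (Z, G *v c, k) =
    (1/2) * (g (br X Y) c - g (br X Z) b + g (br Y Z) a + H Y X Z - 2 * (m * F X Z - l * F Y Z))
    + F X Y * k"
proof -
  let ?f = "\<lambda>Z. - ((G *v b) \<bullet> br X Z) + (G *v a) \<bullet> br Y Z + H Y X Z - 2 * (m * F X Z - l * F Y Z)"
  have "linear ?f"
    by (rule linearI) (simp_all add: br_simps H_simps F_simps inner_add_right algebra_simps)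
  moreover have "(G *v c) \<bullet> br X Y = g (br X Y) c" "(G *v b) \<bullet> br X Z = g (br X Z) b"
    "(G *v a) \<bullet> br Y Z = g (br Y Z) a"
    by (simp_all add: gmet_def inner_commute)
  ultimately show ?thesis
    unfolding dorfman_def pairing_def using covec_inner[of ?f Z] by simp
qed

lemma g_Xp_Jp: "g Xp (Jp *v x) = 0"
  using Jp_skew[of Xp x] Jp_Xp by (simp add: gmet_def)

lemma Jp_square: "Jp *v (Jp *v x) = g Xp x *\<^sub>R Xp - x"
proof -
  have "g Xp (x - g Xp x *\<^sub>R Xp) = 0"
    using Xp_unit by (simp add: gmet_simps)
  then have "Jp *v (Jp *v (x - g Xp x *\<^sub>R Xp)) = - (x - g Xp x *\<^sub>R Xp)"
    by (rule Jp_square_perp)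
  then show ?thesis
    using Jp_Xp by (simp add: matrix_vector_mult_simps)
qed

text \<open>Sections \<open>u\<^sub>1 + i u\<^sub>2\<close> of the \<open>i\<close>-eigenbundles, encoded as pairs \<open>(u\<^sub>1, u\<^sub>2)\<close>.
  Inside \<open>E\<^sub>-\<close>, \<open>eig_minus\<close> serves \<open>Fe\<close> and \<open>eig_minus_conj\<close> serves \<open>GFe\<close>, which is
  \<open>-Fe\<close> there.\<close>

definition "eig_plus x = ((x, G *v x, 0), (- (Jp *v x), G *v (- (Jp *v x)), g Xp x))"
definition "eig_minus x = ((x, G *v (- x), 0), (- (Jm *v x), G *v (Jm *v x), 0))"
definition "eig_minus_conj x = ((x, G *v (- x), 0), (Jm *v x, G *v (- (Jm *v x)), 0))"
definition "kernel_section = (Xm, G *v (- Xm), 0)"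

lemma eig_plus_Fe:
  "Fe (fst (eig_plus x)) = - snd (eig_plus x)" "Fe (snd (eig_plus x)) = fst (eig_plus x)"
  unfolding eig_plus_def fst_conv snd_conv Fe_Gcoord
  by (simp_all add: Jp_square g_Xp_Jp vec_mult_2 matrix_vector_mult_simps vec_eq_iff gmet_simps
      field_simps)

lemma eig_plus_GFe:
  "GFe (fst (eig_plus x)) = - snd (eig_plus x)" "GFe (snd (eig_plus x)) = fst (eig_plus x)"
  unfolding eig_plus_def fst_conv snd_conv GFe_Gcoord
  by (simp_all add: Jp_square g_Xp_Jp vec_mult_2 matrix_vector_mult_simps vec_eq_iff gmet_simps
      field_simps)

lemma eig_minus_Fe:
  assumes "g Xm x = 0"
  shows "Fe (fst (eig_minus x)) = - snd (eig_minus x)" "Fe (snd (eig_minus x)) = fst (eig_minus x)"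
  using assms unfolding eig_minus_def fst_conv snd_conv Fe_Gcoord
  by (simp_all add: Jm_square_perp vec_mult_2 matrix_vector_mult_simps vec_eq_iff gmet_simps
      field_simps)

lemma eig_minus_conj_GFe:
  assumes "g Xm x = 0"
  shows "GFe (fst (eig_minus_conj x)) = - snd (eig_minus_conj x)"
    "GFe (snd (eig_minus_conj x)) = fst (eig_minus_conj x)"
  using assms unfolding eig_minus_conj_def fst_conv snd_conv GFe_Gcoord
  by (simp_all add: Jm_square_perp vec_mult_2 matrix_vector_mult_simps vec_eq_iff gmet_simps
      field_simps)

lemma kernel_section_Fe: "Fe kernel_section = 0" and kernel_section_GFe: "GFe kernel_section = 0"
  unfolding kernel_section_def Fe_Gcoord GFe_Gcoord
  by (simp_all add: Jm_Xm vec_mult_2 matrix_vector_mult_simps vec_eq_iff gmet_simps field_simps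
      zero_prod_def)

lemma Fe_involutive: "i_eig_involutive Fe dorf" and GFe_involutive: "i_eig_involutive GFe dorf"
  using kaehler unfolding gen_pseudo_kaehler_def by auto

lemma Fe_bracket_kernel:
  assumes "Fe u1 = - u2" "Fe u2 = u1" "Fe v1 = - v2" "Fe v2 = v1"
  shows "pairing (dorf u1 v1 - dorf u2 v2) kernel_section = 0"
    "pairing (dorf u1 v2 + dorf u2 v1) kernel_section = 0"
  using i_eig_involutive_skew(2)[where T = Fe and B = pairing, OF Fe_involutive bilinear_pairing
      Fe_skew assms kernel_section_Fe] by auto

lemma GFe_bracket_kernel:
  assumes "GFe u1 = - u2" "GFe u2 = u1" "GFe v1 = - v2" "GFe v2 = v1"
  shows "pairing (dorf u1 v1 - dorf u2 v2) kernel_section = 0"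
    "pairing (dorf u1 v2 + dorf u2 v1) kernel_section = 0"
  using i_eig_involutive_skew(2)[where T = GFe and B = pairing, OF GFe_involutive bilinear_pairing
      GFe_skew assms kernel_section_GFe] by auto

lemma Fe_bracket_eigen:
  assumes "Fe u1 = - u2" "Fe u2 = u1" "Fe v1 = - v2" "Fe v2 = v1" "Fe n1 = - n2" "Fe n2 = n1"
  shows "pairing (dorf u1 v1 - dorf u2 v2) n1 = pairing (dorf u1 v2 + dorf u2 v1) n2"
    "pairing (dorf u1 v1 - dorf u2 v2) n2 = - pairing (dorf u1 v2 + dorf u2 v1) n1"
  using i_eig_involutive_skew(1)[where T = Fe and B = pairing, OF Fe_involutive bilinear_pairing
      Fe_skew assms] by auto

lemma GFe_bracket_eigen:
  assumes "GFe u1 = - u2" "GFe u2 = u1" "GFe v1 = - v2" "GFe v2 = v1" "GFe n1 = - n2" "GFe n2 = n1"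
  shows "pairing (dorf u1 v1 - dorf u2 v2) n1 = pairing (dorf u1 v2 + dorf u2 v1) n2"
    "pairing (dorf u1 v1 - dorf u2 v2) n2 = - pairing (dorf u1 v2 + dorf u2 v1) n1"
  using i_eig_involutive_skew(1)[where T = GFe and B = pairing, OF GFe_involutive bilinear_pairing
      GFe_skew assms] by auto

lemma normalize_perp_Xm:
  assumes "y \<noteq> 0" and "g Xm y = 0"
  shows "\<exists>f. g Xm f = 0 \<and> g f f = 1 \<and> (\<exists>k. f = k *\<^sub>R y)"
proof -
  have "g y y > 0"
    using pos assms(1) unfolding pos_def_def by blast
  then have "(1 / sqrt (g y y)) * (1 / sqrt (g y y)) * g y y = 1"
    by (simp add: field_simps real_sqrt_mult_self)
  then show ?thesis
    using assms(2) by (intro exI[of _ "(1 / sqrt (g y y)) *\<^sub>R y"]) (auto simp: gmet_simps)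
qed

lemma adapted_unit_exists: "\<exists>f1. g Xm f1 = 0 \<and> g f1 f1 = 1 \<and> g Xp (Jm *v f1) = 0"
proof -
  have Jm_isotropic: "g x (Jm *v x) = 0" for x
    using Jm_skew[of x x] g_sym[of x "Jm *v x"] by simp
  define v where "v = Xp - g Xp Xm *\<^sub>R Xm"
  have v_perp: "g Xm v = 0"
    unfolding v_def using Xm_unit g_sym[of Xm Xp] by (simp add: gmet_simps)
  show ?thesis
  proof (cases "v = 0")
    case False
    then obtain f k where f: "g Xm f = 0" "g f f = 1" "f = k *\<^sub>R v"
      using normalize_perp_Xm[OF _ v_perp] by blast
    have "Jm *v v = Jm *v Xp"
      unfolding v_def by (simp add: matrix_vector_mult_simps Jm_Xm)
    then have "g Xp (Jm *v f) = 0"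
      unfolding f(3) using Jm_isotropic[of Xp] by (simp add: matrix_vector_mult_simps gmet_simps)
    then show ?thesis
      using f by blast
  next
    case True
    obtain y where "y \<noteq> 0" "orthogonal (G *v Xm) y"
      using orthogonal_to_vector_exists[of "G *v Xm"] by auto
    moreover have "g Xm y = (G *v Xm) \<bullet> y"
      using g_sym[of Xm y] by (simp add: gmet_def inner_commute)
    ultimately obtain f where f: "g Xm f = 0" "g f f = 1"
      using normalize_perp_Xm unfolding orthogonal_def by metis
    obtain b where "Xp = b *\<^sub>R Xm"
      using True unfolding v_def by (metis right_minus_eq)
    moreover have "g Xm (Jm *v f) = 0"
      using Jm_skew[of Xm f] Jm_Xm f(1) by (simp add: gmet_simps)
    ultimately have "g Xp (Jm *v f) = 0"
      by (simp add: gmet_simps)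
    then show ?thesis
      using f by blast
  qed
qed

end

section \<open>An adapted orthonormal frame\<close>

locale gpk_frame = gpk_structure +
  fixes f1 f2 :: vec3
  assumes f1_perp_Xm: "g Xm f1 = 0" and f1_unit: "g f1 f1 = 1"
    and Jm_f1: "Jm *v f1 = f2" and Xp_perp_f2: "g Xp f2 = 0"
begin

abbreviation "\<alpha> \<equiv> g Xp f1"
abbreviation "\<beta> \<equiv> g Xp Xm"

lemma Jm_f2: "Jm *v f2 = - f1"
  using Jm_square_perp[OF f1_perp_Xm] Jm_f1 by simp

lemma frame_gmet:
  "g f1 f1 = 1" "g f2 f2 = 1" "g Xm Xm = 1"
  "g f1 f2 = 0" "g f2 f1 = 0" "g f1 Xm = 0" "g Xm f1 = 0" "g f2 Xm = 0" "g Xm f2 = 0"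
proof -
  have "g f2 f2 = 1"
    using Jm_skew[of f1 f2] Jm_f1 Jm_f2 f1_unit by (simp add: gmet_simps)
  moreover have "g f1 f2 = 0"
    using Jm_skew[of f1 f1] Jm_f1 g_sym[of f1 f2] by simp
  moreover have "g f2 Xm = 0"
    using Jm_skew[of f1 Xm] Jm_f1 Jm_Xm by (simp add: gmet_simps)
  ultimately show "g f1 f1 = 1" "g f2 f2 = 1" "g Xm Xm = 1"
    "g f1 f2 = 0" "g f2 f1 = 0" "g f1 Xm = 0" "g Xm f1 = 0" "g f2 Xm = 0" "g Xm f2 = 0"
    using f1_unit Xm_unit f1_perp_Xm g_sym[of f2 f1] g_sym[of Xm f2] g_sym[of f1 Xm]
    by simp_all
qed

lemma frame_expansion: "x = g x f1 *\<^sub>R f1 + g x f2 *\<^sub>R f2 + g x Xm *\<^sub>R Xm"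
  by (rule gmet_orthonormal_expansion[OF G_sym]) (simp_all add: frame_gmet)

lemma frame_eqI:
  assumes "g v f1 = a" "g v f2 = b" "g v Xm = c"
  shows "v = a *\<^sub>R f1 + b *\<^sub>R f2 + c *\<^sub>R Xm"
  using frame_expansion[of v] assms by simp

lemma frame_combination_eq_0:
  "a *\<^sub>R f1 + b *\<^sub>R f2 + c *\<^sub>R Xm = 0 \<longleftrightarrow> a = 0 \<and> b = 0 \<and> c = 0"
proof
  assume "a *\<^sub>R f1 + b *\<^sub>R f2 + c *\<^sub>R Xm = 0"
  then have "g (a *\<^sub>R f1 + b *\<^sub>R f2 + c *\<^sub>R Xm) x = 0" for x
    by (simp add: gmet_simps)
  from this[of f1] this[of f2] this[of Xm] show "a = 0 \<and> b = 0 \<and> c = 0"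
    by (simp add: gmet_simps frame_gmet)
qed simp

lemma frame_coords:
  obtains a b c where "x = a *\<^sub>R f1 + b *\<^sub>R f2 + c *\<^sub>R Xm"
  using frame_expansion by blast

lemma Xp_in_frame: "Xp = \<alpha> *\<^sub>R f1 + \<beta> *\<^sub>R Xm"
  using frame_eqI[of Xp _ 0] Xp_perp_f2 g_sym by simp

lemma Xp_frame_coords: "\<alpha> * \<alpha> + \<beta> * \<beta> = 1"
  using Xp_unit arg_cong[OF Xp_in_frame, of "\<lambda>v. g v v"]
  by (simp add: gmet_simps frame_gmet)

lemma skew_in_frame:
  assumes skew: "\<And>x y. g (J *v x) y = - g x (J *v y)"
  obtains s t u where "J *v f1 = s *\<^sub>R f2 + t *\<^sub>R Xm" "J *v f2 = (- s) *\<^sub>R f1 + u *\<^sub>R Xm"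
    "J *v Xm = (- t) *\<^sub>R f1 + (- u) *\<^sub>R f2"
proof -
  have diag: "g (J *v x) x = 0" for x
    using skew[of x x] g_sym[of x "J *v x"] by simp
  have anti: "g (J *v x) y = - g (J *v y) x" for x y
    using skew[of x y] g_sym[of x "J *v y"] by simp
  have "J *v f1 = 0 *\<^sub>R f1 + g (J *v f1) f2 *\<^sub>R f2 + g (J *v f1) Xm *\<^sub>R Xm"
    by (rule frame_eqI) (simp_all add: diag)
  moreover have "J *v f2 = (- g (J *v f1) f2) *\<^sub>R f1 + 0 *\<^sub>R f2 + g (J *v f2) Xm *\<^sub>R Xm"
    by (rule frame_eqI) (simp_all add: diag anti[of f2 f1])
  moreover have "J *v Xm = (- g (J *v f1) Xm) *\<^sub>R f1 + (- g (J *v f2) Xm) *\<^sub>R f2 + 0 *\<^sub>R Xm"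
    by (rule frame_eqI) (simp_all add: diag anti[of Xm f1] anti[of Xm f2])
  ultimately show ?thesis
    using that by simp
qed

lemma Jp_in_frame:
  obtains \<sigma> where "\<sigma> * \<sigma> = 1" "Jp *v f1 = (\<sigma> * \<beta>) *\<^sub>R f2"
    "Jp *v f2 = (- \<sigma> * \<beta>) *\<^sub>R f1 + (\<sigma> * \<alpha>) *\<^sub>R Xm" "Jp *v Xm = (- \<sigma> * \<alpha>) *\<^sub>R f2"
proof -
  obtain s t u where J: "Jp *v f1 = s *\<^sub>R f2 + t *\<^sub>R Xm" "Jp *v f2 = (- s) *\<^sub>R f1 + u *\<^sub>R Xm"
    "Jp *v Xm = (- t) *\<^sub>R f1 + (- u) *\<^sub>R f2"
    using skew_in_frame[OF Jp_skew] by blast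
  have "(- \<beta> * t) *\<^sub>R f1 + (\<alpha> * s - \<beta> * u) *\<^sub>R f2 + (\<alpha> * t) *\<^sub>R Xm = Jp *v Xp"
    by (subst (2) Xp_in_frame) (simp add: J matrix_vector_mult_simps algebra_simps)
  then have Xp_kernel: "\<beta> * t = 0" "\<alpha> * s = \<beta> * u" "\<alpha> * t = 0"
    unfolding Jp_Xp frame_combination_eq_0 by simp_all
  then have t: "t = 0"
    using Xp_frame_coords by algebra
  have "0 *\<^sub>R f1 + (1 - s * s - u * u) *\<^sub>R f2 + 0 *\<^sub>R Xm = f2 + Jp *v (Jp *v f2)"
    by (simp add: J t matrix_vector_mult_simps algebra_simps)
  also have "\<dots> = 0"
    by (simp add: Jp_square_perp[OF Xp_perp_f2])
  finally have "s * s + u * u = 1"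
    unfolding frame_combination_eq_0 by simp
  moreover define \<sigma> where "\<sigma> = \<alpha> * u + \<beta> * s"
  ultimately have \<sigma>: "\<sigma> * \<sigma> = 1" "s = \<sigma> * \<beta>" "u = \<sigma> * \<alpha>"
    using Xp_kernel(2) Xp_frame_coords by algebra+
  show thesis
    by (rule that[of \<sigma>]) (use J t \<sigma> in simp_all)
qed

lemma g_br_frame: "g f1 (br a b) = g (br a b) f1" "g f2 (br a b) = g (br a b) f2"
  "g Xm (br a b) = g (br a b) Xm"
  using g_sym by blast+

lemma br_frame_antisym: "br f2 f1 = - br f1 f2" "br Xm f1 = - br f1 Xm" "br Xm f2 = - br f2 Xm"
  using br_antisym by blast+

lemma F_frame_antisym: "F f2 f1 = - F f1 f2" "F Xm f1 = - F f1 Xm" "F Xm f2 = - F f2 Xm"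
  using F_antisym by blast+

lemma H_frame_antisym:
  "H f2 f1 z = - H f1 f2 z" "H Xm f1 z = - H f1 Xm z" "H Xm f2 z = - H f2 Xm z"
  "H x f2 f1 = - H x f1 f2" "H x Xm f1 = - H x f1 Xm" "H x Xm f2 = - H x f2 Xm"
  using H_antisym by blast+

end

section \<open>The involutivity conditions in the frame\<close>

text \<open>By \<open>Jp_in_frame\<close>, \<open>J\<^sub>+\<close> always has this form for some sign \<open>\<sigma>\<close>.\<close>

locale gpk_adapted_frame = gpk_frame +
  fixes \<sigma> :: real
  assumes sigma_square: "\<sigma> * \<sigma> = 1"
    and Jp_f1: "Jp *v f1 = (\<sigma> * \<beta>) *\<^sub>R f2"
    and Jp_f2: "Jp *v f2 = (- \<sigma> * \<beta>) *\<^sub>R f1 + (\<sigma> * \<alpha>) *\<^sub>R Xm"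
    and Jp_Xm: "Jp *v Xm = (- \<sigma> * \<alpha>) *\<^sub>R f2"
begin

lemmas eig_minus_f1 = eig_minus_Fe[OF f1_perp_Xm]
lemmas eig_minus_conj_f1 = eig_minus_conj_GFe[OF f1_perp_Xm]

lemmas pairing_unfold = pairing_simps pairing_dorfman_Gcoord
  eig_plus_def eig_minus_def eig_minus_conj_def kernel_section_def fst_conv snd_conv

lemmas frame_eval_simps = frame_gmet Xp_perp_f2 g_br_frame br_self br_frame_antisym
  H_alternating H_frame_antisym F_self F_frame_antisym Jp_f1 Jp_f2 Jp_Xm Jm_f1 Jm_f2 Jm_Xm
  br_simps H_simps F_simps gmet_simps matrix_vector_mult_simps algebra_simps

lemma ad_Xm_constraints:
  "g (br f1 Xm) Xm = 0" "g (br f1 Xm) f1 = 0" "g (br f2 Xm) f2 = 0" "F f2 Xm = 0"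
proof -
  have e1: "F f2 Xm * \<beta> + g (br f1 Xm) Xm + g (br f2 Xm) f2 * \<alpha> * \<sigma> = 0"
    using Fe_bracket_kernel(1)[OF eig_plus_Fe[of Xm] eig_minus_f1]
    unfolding pairing_unfold by (simp add: frame_eval_simps)
  have e2: "- F f2 Xm * \<beta> + g (br f1 Xm) Xm - g (br f2 Xm) f2 * \<alpha> * \<sigma> = 0"
    using GFe_bracket_kernel(1)[OF eig_plus_GFe[of Xm] eig_minus_conj_f1]
    unfolding pairing_unfold by (simp add: frame_eval_simps)
  have e3: "F f2 Xm * \<alpha> - g (br f2 Xm) f2 * \<beta> * \<sigma> + g (br f1 Xm) f1 = 0"
    using Fe_bracket_kernel(1)[OF eig_plus_Fe[of f1] eig_minus_f1]
    unfolding pairing_unfold by (simp add: frame_eval_simps)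
  have e4: "- F f2 Xm * \<alpha> + g (br f2 Xm) f2 * \<beta> * \<sigma> + g (br f1 Xm) f1 = 0"
    using GFe_bracket_kernel(1)[OF eig_plus_GFe[of f1] eig_minus_conj_f1]
    unfolding pairing_unfold by (simp add: frame_eval_simps)
  have e5: "- F f2 Xm * \<beta> * \<beta> * \<sigma> - F f2 Xm * \<alpha> * \<alpha> * \<sigma> - g (br f1 Xm) Xm = 0"
    using Fe_bracket_kernel(1)[OF eig_plus_Fe[of f1] eig_plus_Fe[of Xm]]
    unfolding pairing_unfold by (simp add: frame_eval_simps)
  show Xm: "g (br f1 Xm) Xm = 0"
    using e1 e2 by linarith
  show f1: "g (br f1 Xm) f1 = 0"
    using e3 e4 by linarith
  have "F f2 Xm * \<sigma> * (\<alpha> * \<alpha> + \<beta> * \<beta>) = 0"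
    using e5 Xm by algebra
  then show F: "F f2 Xm = 0"
    using Xp_frame_coords sigma_square by algebra
  have "g (br f2 Xm) f2 * \<alpha> * \<sigma> = 0" "g (br f2 Xm) f2 * \<beta> * \<sigma> = 0"
    using e1 e3 Xm f1 F by simp_all
  then show "g (br f2 Xm) f2 = 0"
    using Xp_frame_coords sigma_square by algebra
qed

lemma ad_Xm_skew:
  "g (br f2 Xm) Xm = 0" "g (br f2 Xm) f1 = - g (br f1 Xm) f2"
  "g (br f1 f2) Xm = - H f1 f2 Xm" "F f1 Xm = 0"
proof -
  have e6: "F f1 Xm * \<beta> + (1/2) * H f1 f2 Xm * \<alpha> * \<sigma> + g (br f2 Xm) Xm
      + (1/2) * g (br f1 f2) Xm * \<alpha> * \<sigma> + (1/2) * g (br f1 Xm) f2 * \<alpha> * \<sigma>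
      + (1/2) * g (br f2 Xm) f1 * \<alpha> * \<sigma> = 0"
    using GFe_bracket_kernel(2)[OF eig_plus_GFe[of Xm] eig_minus_conj_f1]
    unfolding pairing_unfold by (simp add: frame_eval_simps)
  have e7: "F f1 Xm * \<beta> + (1/2) * H f1 f2 Xm * \<alpha> * \<sigma> - g (br f2 Xm) Xm
      + (1/2) * g (br f1 f2) Xm * \<alpha> * \<sigma> + (1/2) * g (br f1 Xm) f2 * \<alpha> * \<sigma>
      + (1/2) * g (br f2 Xm) f1 * \<alpha> * \<sigma> = 0"
    using Fe_bracket_kernel(2)[OF eig_plus_Fe[of Xm] eig_minus_f1]
    unfolding pairing_unfold by (simp add: frame_eval_simps)
  have e8: "F f1 Xm * \<alpha> + (1/2) * H f1 f2 Xm - (1/2) * H f1 f2 Xm * \<beta> * \<sigma>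
      + (1/2) * g (br f1 f2) Xm - (1/2) * g (br f1 f2) Xm * \<beta> * \<sigma>
      - (1/2) * g (br f1 Xm) f2 - (1/2) * g (br f1 Xm) f2 * \<beta> * \<sigma>
      - (1/2) * g (br f2 Xm) f1 - (1/2) * g (br f2 Xm) f1 * \<beta> * \<sigma> = 0"
    using Fe_bracket_kernel(2)[OF eig_plus_Fe[of f1] eig_minus_f1]
    unfolding pairing_unfold by (simp add: frame_eval_simps)
  have e9: "F f1 Xm * \<alpha> - (1/2) * H f1 f2 Xm - (1/2) * H f1 f2 Xm * \<beta> * \<sigma>
      - (1/2) * g (br f1 f2) Xm - (1/2) * g (br f1 f2) Xm * \<beta> * \<sigma>
      + (1/2) * g (br f1 Xm) f2 - (1/2) * g (br f1 Xm) f2 * \<beta> * \<sigma>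
      + (1/2) * g (br f2 Xm) f1 - (1/2) * g (br f2 Xm) f1 * \<beta> * \<sigma> = 0"
    using GFe_bracket_kernel(2)[OF eig_plus_GFe[of f1] eig_minus_conj_f1]
    unfolding pairing_unfold by (simp add: frame_eval_simps)
  have e10: "(1/2) * H f1 f2 Xm + (1/2) * H f1 f2 Xm * \<beta> * \<sigma> + g (br f2 Xm) Xm * \<alpha> * \<sigma>
      + (1/2) * g (br f1 f2) Xm + (1/2) * g (br f1 f2) Xm * \<beta> * \<sigma>
      + (1/2) * g (br f1 Xm) f2 - (1/2) * g (br f1 Xm) f2 * \<beta> * \<sigma>
      + (1/2) * g (br f2 Xm) f1 - (1/2) * g (br f2 Xm) f1 * \<beta> * \<sigma> = 0"
    using GFe_bracket_kernel(1)[OF eig_plus_GFe[of f2] eig_minus_conj_f1]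
    unfolding pairing_unfold by (simp add: frame_eval_simps)
  show f2_Xm: "g (br f2 Xm) Xm = 0"
    using e6 e7 by linarith
  have minus: "H f1 f2 Xm + g (br f1 f2) Xm - g (br f1 Xm) f2 - g (br f2 Xm) f1 = 0"
    using e8 e9 by linarith
  have plus: "H f1 f2 Xm + g (br f1 f2) Xm + g (br f1 Xm) f2 + g (br f2 Xm) f1 = 0"
    using e10 minus f2_Xm by algebra
  show "g (br f2 Xm) f1 = - g (br f1 Xm) f2" "g (br f1 f2) Xm = - H f1 f2 Xm"
    using minus plus by linarith+
  have "F f1 Xm * \<beta> = 0" "F f1 Xm * \<alpha> = 0"
    using e6 e8 e9 plus minus f2_Xm by algebra+
  then show "F f1 Xm = 0"
    using Xp_frame_coords by algebra
qed

lemma H_f1_f2_Xm: "H f1 f2 Xm = 0" "\<alpha> * g (br f1 f2) f1 = 0"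
proof -
  have e11: "- F f1 Xm * \<alpha> - (1/2) * H f1 f2 Xm + (1/2) * H f1 f2 Xm * \<beta> * \<sigma>
      + (1/2) * g (br f1 f2) Xm - (1/2) * g (br f1 f2) Xm * \<beta> * \<sigma>
      + (1/2) * g (br f1 Xm) f2 + (1/2) * g (br f1 Xm) f2 * \<beta> * \<sigma>
      + (1/2) * g (br f2 Xm) f1 + (1/2) * g (br f2 Xm) f1 * \<beta> * \<sigma>
      - g (br f1 f2) f1 * \<alpha> * \<sigma> = 0"
    using Fe_bracket_eigen(2)[OF eig_plus_Fe[of f1] eig_plus_Fe[of Xm] eig_minus_f1]
    unfolding pairing_unfold by (simp add: frame_eval_simps)
  have e12: "- F f1 Xm * \<alpha> + (1/2) * H f1 f2 Xm + (1/2) * H f1 f2 Xm * \<beta> * \<sigma>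
      - (1/2) * g (br f1 f2) Xm - (1/2) * g (br f1 f2) Xm * \<beta> * \<sigma>
      - (1/2) * g (br f1 Xm) f2 + (1/2) * g (br f1 Xm) f2 * \<beta> * \<sigma>
      - (1/2) * g (br f2 Xm) f1 + (1/2) * g (br f2 Xm) f1 * \<beta> * \<sigma>
      - g (br f1 f2) f1 * \<alpha> * \<sigma> = 0"
    using GFe_bracket_eigen(2)[OF eig_plus_GFe[of f1] eig_plus_GFe[of Xm] eig_minus_conj_f1]
    unfolding pairing_unfold by (simp add: frame_eval_simps)
  show h: "H f1 f2 Xm = 0"
    using e11 e12 ad_Xm_skew by linarith
  have "g (br f1 f2) f1 * \<alpha> * \<sigma> = 0"
    using e11 e12 ad_Xm_skew h by algebra
  then show "\<alpha> * g (br f1 f2) f1 = 0"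
    using sigma_square by algebra
qed

lemma F_f1_f2: "F f1 f2 = 0" "\<alpha> * g (br f1 f2) f2 = 0"
proof -
  have e13: "F f2 Xm * \<alpha> + F f1 f2 * \<beta> + F f1 f2 * \<beta> * \<beta> * \<sigma> + F f1 f2 * \<alpha> * \<alpha> * \<sigma>
      - g (br f2 Xm) f2 * \<beta> * \<sigma> + g (br f1 f2) f2 * \<alpha> * \<sigma> - g (br f1 Xm) f1 = 0"
    using GFe_bracket_eigen(1)[OF eig_plus_GFe[of f1] eig_plus_GFe[of Xm] eig_minus_conj_f1]
    unfolding pairing_unfold by (simp add: frame_eval_simps)
  have e14: "- F f2 Xm * \<alpha> - F f1 f2 * \<beta> + F f1 f2 * \<beta> * \<beta> * \<sigma> + F f1 f2 * \<alpha> * \<alpha> * \<sigma>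
      + g (br f2 Xm) f2 * \<beta> * \<sigma> - g (br f1 f2) f2 * \<alpha> * \<sigma> - g (br f1 Xm) f1 = 0"
    using Fe_bracket_eigen(1)[OF eig_plus_Fe[of f1] eig_plus_Fe[of Xm] eig_minus_f1]
    unfolding pairing_unfold by (simp add: frame_eval_simps)
  have "F f1 f2 * \<sigma> * (\<alpha> * \<alpha> + \<beta> * \<beta>) = 0"
    using e13 e14 ad_Xm_constraints by algebra
  then show F: "F f1 f2 = 0"
    using Xp_frame_coords sigma_square by algebra
  have "g (br f1 f2) f2 * \<alpha> * \<sigma> = 0"
    using e13 e14 ad_Xm_constraints F by algebra
  then show "\<alpha> * g (br f1 f2) f2 = 0"
    using sigma_square by algebra
qed

lemma Xp_f1_ad_Xm: "\<alpha> * g (br f1 Xm) f2 = 0"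
proof -
  have e15: "- F f1 Xm * \<alpha> * \<beta> * \<sigma> - (1/2) * H f1 f2 Xm
      + (1/2) * H f1 f2 Xm * \<beta> * \<beta> * \<sigma> * \<sigma> + g (br f2 Xm) Xm * \<alpha> * \<beta> * \<sigma> * \<sigma>
      - (1/2) * g (br f1 f2) Xm + (1/2) * g (br f1 f2) Xm * \<beta> * \<beta> * \<sigma> * \<sigma>
      - (1/2) * g (br f1 Xm) f2 + (1/2) * g (br f1 Xm) f2 * \<beta> * \<beta> * \<sigma> * \<sigma>
      + (1/2) * g (br f2 Xm) f1 - (1/2) * g (br f2 Xm) f1 * \<beta> * \<beta> * \<sigma> * \<sigma> = 0"
    using Fe_bracket_kernel(1)[OF eig_plus_Fe[of f1] eig_plus_Fe[of f2]]
    unfolding pairing_unfold by (simp add: frame_eval_simps)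
  then have "\<alpha> * (\<alpha> * g (br f1 Xm) f2) = 0"
    using ad_Xm_skew H_f1_f2_Xm(1) sigma_square Xp_frame_coords by algebra
  then show ?thesis
    by simp
qed

end

section \<open>Normal forms\<close>

text \<open>Orthonormal bases of \<open>\<ee>(2)\<close>, the Lie algebra of Euclidean motions of the plane, and
  adapted bases of \<open>\<aa>\<ff>\<ff>(\<real>) \<oplus> \<real>\<close>: cases (i) and (ii) of the theorem.\<close>

definition e2_frame :: "(vec3 \<Rightarrow> vec3 \<Rightarrow> vec3) \<Rightarrow> mat3 \<Rightarrow> vec3 \<Rightarrow> vec3 \<Rightarrow> bool" where
  "e2_frame br G Xp Xm \<longleftrightarrow> (\<exists>w1 w2 w3.
     gmet G w1 w1 = 1 \<and> gmet G w2 w2 = 1 \<and> gmet G w3 w3 = 1 \<and>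
     gmet G w1 w2 = 0 \<and> gmet G w1 w3 = 0 \<and> gmet G w2 w3 = 0 \<and>
     br w1 w2 = w3 \<and> br w2 w3 = w1 \<and> br w3 w1 = 0 \<and>
     Xm = w2 \<and> (Xp = Xm \<or> Xp = - Xm))"

definition aff_frame :: "(vec3 \<Rightarrow> vec3 \<Rightarrow> vec3) \<Rightarrow> mat3 \<Rightarrow> vec3 \<Rightarrow> vec3 \<Rightarrow> bool" where
  "aff_frame br G Xp Xm \<longleftrightarrow> (\<exists>w1 w2 w3 \<delta>. \<delta> \<noteq> 0 \<and>
     gmet G w1 w1 = 1 / \<delta>^2 \<and> gmet G w2 w2 = 1 \<and> gmet G w3 w3 = 1 \<and>
     gmet G w1 w2 = 0 \<and> gmet G w1 w3 = 0 \<and> gmet G w2 w3 = 0 \<and>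
     br w1 w2 = w2 \<and> br w1 w3 = 0 \<and> br w2 w3 = 0 \<and>
     Xm = w3 \<and> (Xp = Xm \<or> Xp = - Xm))"

context gpk_adapted_frame
begin

text \<open>Definitions rather than abbreviations: as rewrite rules, \<open>brackets_in_frame\<close> would
  otherwise loop, since \<open>\<theta>\<close> contains \<open>br f1 Xm\<close>.\<close>

definition "\<theta> = g (br f1 Xm) f2"
definition "\<kappa> = g (br f1 f2) f1"
definition "\<rho> = g (br f1 f2) f2"

lemma brackets_in_frame:
  "br f1 Xm = \<theta> *\<^sub>R f2" "br f2 Xm = (- \<theta>) *\<^sub>R f1" "br f1 f2 = \<kappa> *\<^sub>R f1 + \<rho> *\<^sub>R f2"
  using frame_eqI[of "br f1 Xm" 0 \<theta> 0] frame_eqI[of "br f2 Xm" "- \<theta>" 0 0]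
    frame_eqI[of "br f1 f2" \<kappa> \<rho> 0] ad_Xm_constraints ad_Xm_skew H_f1_f2_Xm(1)
  by (simp_all add: \<theta>_def \<kappa>_def \<rho>_def)

lemma H_zero: "H x y z = 0"
proof -
  obtain a1 b1 c1 where x: "x = a1 *\<^sub>R f1 + b1 *\<^sub>R f2 + c1 *\<^sub>R Xm"
    by (rule frame_coords)
  obtain a2 b2 c2 where y: "y = a2 *\<^sub>R f1 + b2 *\<^sub>R f2 + c2 *\<^sub>R Xm"
    by (rule frame_coords)
  obtain a3 b3 c3 where z: "z = a3 *\<^sub>R f1 + b3 *\<^sub>R f2 + c3 *\<^sub>R Xm"
    by (rule frame_coords)
  show ?thesis
    unfolding x y z
    by (simp add: H_simps H_alternating H_frame_antisym H_f1_f2_Xm(1))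
qed

lemma F_zero: "F x y = 0"
proof -
  obtain a1 b1 c1 where x: "x = a1 *\<^sub>R f1 + b1 *\<^sub>R f2 + c1 *\<^sub>R Xm"
    by (rule frame_coords)
  obtain a2 b2 c2 where y: "y = a2 *\<^sub>R f1 + b2 *\<^sub>R f2 + c2 *\<^sub>R Xm"
    by (rule frame_coords)
  show ?thesis
    unfolding x y
    by (simp add: F_simps F_self F_frame_antisym ad_Xm_constraints(4) ad_Xm_skew(4) F_f1_f2(1))
qed

lemma jacobi_in_frame: "\<theta> * \<kappa> = 0" "\<theta> * \<rho> = 0"
proof -
  have "br f1 (br f2 Xm) + br f2 (br Xm f1) + br Xm (br f1 f2) = 0"
    by (rule jacobi)
  then have "g (br f1 (br f2 Xm) + br f2 (br Xm f1) + br Xm (br f1 f2)) v = 0" for v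
    by (simp add: gmet_simps)
  from this[of f1] this[of f2] show "\<theta> * \<kappa> = 0" "\<theta> * \<rho> = 0"
    by (simp_all add: brackets_in_frame br_frame_antisym br_simps br_self gmet_simps frame_gmet
        algebra_simps)
qed

lemma abelian_in_frame:
  assumes "\<theta> = 0" "\<kappa> = 0" "\<rho> = 0"
  shows "abelian br"
  unfolding abelian_def
proof (intro allI)
  fix x y
  obtain a1 b1 c1 where x: "x = a1 *\<^sub>R f1 + b1 *\<^sub>R f2 + c1 *\<^sub>R Xm"
    by (rule frame_coords)
  obtain a2 b2 c2 where y: "y = a2 *\<^sub>R f1 + b2 *\<^sub>R f2 + c2 *\<^sub>R Xm"
    by (rule frame_coords)
  show "br x y = 0"
    unfolding x y using assms by (simp add: br_simps br_self br_frame_antisym brackets_in_frame)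
qed

lemma Xp_eq_pm_Xm:
  assumes "\<alpha> = 0"
  shows "Xp = Xm \<or> Xp = - Xm"
proof -
  have "\<beta> = 1 \<or> \<beta> = -1"
    using Xp_frame_coords assms by (simp add: square_eq_1_iff)
  then show ?thesis
    using Xp_in_frame assms by auto
qed

lemma e2_case:
  assumes "\<theta> \<noteq> 0" and "\<alpha> = 0"
  shows "e2_frame br (\<theta>^2 *\<^sub>R G) ((1/\<theta>) *\<^sub>R Xp) ((1/\<theta>) *\<^sub>R Xm)"
  unfolding e2_frame_def
proof (intro exI conjI)
  have "\<kappa> = 0" "\<rho> = 0"
    using jacobi_in_frame assms(1) by simp_all
  then show "br ((1/\<theta>) *\<^sub>R f1) ((1/\<theta>) *\<^sub>R Xm) = (1/\<theta>) *\<^sub>R f2"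
    "br ((1/\<theta>) *\<^sub>R Xm) ((1/\<theta>) *\<^sub>R f2) = (1/\<theta>) *\<^sub>R f1"
    "br ((1/\<theta>) *\<^sub>R f2) ((1/\<theta>) *\<^sub>R f1) = 0"
    using assms(1) by (simp_all add: br_simps br_frame_antisym brackets_in_frame)
  show "(1/\<theta>) *\<^sub>R Xp = (1/\<theta>) *\<^sub>R Xm \<or> (1/\<theta>) *\<^sub>R Xp = - ((1/\<theta>) *\<^sub>R Xm)"
    using Xp_eq_pm_Xm[OF assms(2)] by auto
qed (use assms(1) in \<open>simp_all add: gmet_scaleR_matrix gmet_simps frame_gmet power2_eq_square\<close>)

lemma aff_case:
  assumes "\<theta> = 0" and "\<kappa> \<noteq> 0 \<or> \<rho> \<noteq> 0" and "\<alpha> = 0"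
  shows "aff_frame br G Xp Xm"
proof -
  define r where "r = sqrt (\<kappa> * \<kappa> + \<rho> * \<rho>)"
  have pos: "\<kappa> * \<kappa> + \<rho> * \<rho> > 0"
    using assms(2) by (simp add: sum_squares_gt_zero_iff)
  have r: "r \<noteq> 0" "r * r = \<kappa> * \<kappa> + \<rho> * \<rho>"
    unfolding r_def using real_sqrt_gt_zero[OF pos] pos by (auto simp: real_sqrt_mult_self)
  define w1 where "w1 = (1/(r*r)) *\<^sub>R (\<rho> *\<^sub>R f1 - \<kappa> *\<^sub>R f2)"
  define w2 where "w2 = (1/r) *\<^sub>R (\<kappa> *\<^sub>R f1 + \<rho> *\<^sub>R f2)"
  have "g w1 w1 = (1/(r*r)) * (1/(r*r)) * (\<kappa> * \<kappa> + \<rho> * \<rho>)"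
    "g w2 w2 = (1/r) * (1/r) * (\<kappa> * \<kappa> + \<rho> * \<rho>)"
    unfolding w1_def w2_def by (simp_all add: gmet_simps frame_gmet algebra_simps)
  then have "g w1 w1 = 1 / r^2" "g w2 w2 = 1"
    unfolding r(2)[symmetric] using r(1) by (simp_all add: power2_eq_square)
  moreover have "g w1 w2 = 0" "g w1 Xm = 0" "g w2 Xm = 0"
    unfolding w1_def w2_def by (simp_all add: gmet_simps frame_gmet algebra_simps)
  moreover have "br w1 w2 = ((1/(r*r)) * (1/r) * (\<kappa> * \<kappa> + \<rho> * \<rho>)) *\<^sub>R (\<kappa> *\<^sub>R f1 + \<rho> *\<^sub>R f2)"
    unfolding w1_def w2_def
    by (simp add: br_simps br_frame_antisym br_self brackets_in_frame algebra_simps)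
  then have "br w1 w2 = w2"
    unfolding w2_def r(2)[symmetric] using r(1) by simp
  moreover have "br w1 Xm = 0" "br w2 Xm = 0"
    unfolding w1_def w2_def using assms(1) by (simp_all add: br_simps brackets_in_frame)
  ultimately show ?thesis
    unfolding aff_frame_def using r(1) Xm_unit Xp_eq_pm_Xm[OF assms(3)] by blast
qed

lemma normal_form:
  "\<exists>\<mu>. \<mu> \<noteq> 0 \<and> (e2_frame br (\<mu>^2 *\<^sub>R G) ((1/\<mu>) *\<^sub>R Xp) ((1/\<mu>) *\<^sub>R Xm)
      \<or> aff_frame br (\<mu>^2 *\<^sub>R G) ((1/\<mu>) *\<^sub>R Xp) ((1/\<mu>) *\<^sub>R Xm) \<or> abelian br)"
proof (cases "\<theta> = 0 \<and> \<kappa> = 0 \<and> \<rho> = 0")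
  case True
  then show ?thesis
    using abelian_in_frame by (intro exI[of _ 1]) simp
next
  case False
  then have "\<alpha> = 0"
    using Xp_f1_ad_Xm H_f1_f2_Xm(2) F_f1_f2(2) unfolding \<theta>_def \<kappa>_def \<rho>_def by auto
  show ?thesis
  proof (cases "\<theta> = 0")
    case True
    then show ?thesis
      using aff_case[OF True _ \<open>\<alpha> = 0\<close>] False by (intro exI[of _ 1]) simp
  next
    case False
    then show ?thesis
      using e2_case[OF False \<open>\<alpha> = 0\<close>] by blast
  qed
qed

end

lemma (in gpk_structure) adapted_frame_exists:
  "\<exists>f1 f2 \<sigma>. gpk_adapted_frame br H F G Jp Jm Xp Xm f1 f2 \<sigma>"
proof -
  obtain f1 where f1: "g Xm f1 = 0" "g f1 f1 = 1" "g Xp (Jm *v f1) = 0"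
    using adapted_unit_exists by blast
  then interpret gpk_frame br H F G Jp Jm Xp Xm f1 "Jm *v f1"
    by unfold_locales simp_all
  obtain \<sigma> where "gpk_adapted_frame_axioms G Jp Xp Xm f1 (Jm *v f1) \<sigma>"
    unfolding gpk_adapted_frame_axioms_def by (rule Jp_in_frame) blast
  then show ?thesis
    using gpk_adapted_frame.intro gpk_frame_axioms by blast
qed

theorem corollary7p5:
  fixes br :: "real^3 \<Rightarrow> real^3 \<Rightarrow> real^3"
    and H :: "real^3 \<Rightarrow> real^3 \<Rightarrow> real^3 \<Rightarrow> real"
    and F :: "real^3 \<Rightarrow> real^3 \<Rightarrow> real"
    and G Jp Jm :: "real^3^3" and Xp Xm :: "real^3"
  assumes "lie_algebra br"
    and "courant_data br H F"
    and "component_data G Jp Jm Xp Xm"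
    and "pos_def G"
    and "gen_pseudo_kaehler br H F G Jp Jm Xp"
  shows "(\<forall>x y z. H x y z = 0) \<and> (\<forall>x y. F x y = 0) \<and>
    (\<forall>J\<in>{Jp, Jm}. \<forall>x y. gmet G (J *v x) y = - gmet G x (J *v y)) \<and>
    Jp *v Xp = 0 \<and> Jm *v Xm = 0 \<and>
    (\<forall>y. gmet G Xp y = 0 \<longrightarrow> Jp *v (Jp *v y) = - y) \<and>
    (\<forall>y. gmet G Xm y = 0 \<longrightarrow> Jm *v (Jm *v y) = - y) \<and>
    (\<exists>\<mu>::real. \<mu> \<noteq> 0 \<and>
      (let G' = (\<mu>^2) *\<^sub>R G; Xp' = (1/\<mu>) *\<^sub>R Xp; Xm' = (1/\<mu>) *\<^sub>R Xm in
        (\<exists>w1 w2 w3.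
           gmet G' w1 w1 = 1 \<and> gmet G' w2 w2 = 1 \<and> gmet G' w3 w3 = 1 \<and>
           gmet G' w1 w2 = 0 \<and> gmet G' w1 w3 = 0 \<and> gmet G' w2 w3 = 0 \<and>
           br w1 w2 = w3 \<and> br w2 w3 = w1 \<and> br w3 w1 = 0 \<and>
           Xm' = w2 \<and> (Xp' = Xm' \<or> Xp' = - Xm'))
      \<or> (\<exists>w1 w2 w3 \<delta>. \<delta> \<noteq> 0 \<and>
           gmet G' w1 w1 = 1 / \<delta>^2 \<and> gmet G' w2 w2 = 1 \<and> gmet G' w3 w3 = 1 \<and>
           gmet G' w1 w2 = 0 \<and> gmet G' w1 w3 = 0 \<and> gmet G' w2 w3 = 0 \<and>
           br w1 w2 = w2 \<and> br w1 w3 = 0 \<and> br w2 w3 = 0 \<and>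
           Xm' = w3 \<and> (Xp' = Xm' \<or> Xp' = - Xm'))
      \<or> abelian br))"
proof -
  interpret gpk_structure br H F G Jp Jm Xp Xm
    using assms by unfold_locales
  obtain f1 f2 \<sigma> where "gpk_adapted_frame br H F G Jp Jm Xp Xm f1 f2 \<sigma>"
    using adapted_frame_exists by blast
  then interpret gpk_adapted_frame br H F G Jp Jm Xp Xm f1 f2 \<sigma> .
  show ?thesis
    using H_zero F_zero normal_form assms(3)
    unfolding component_data_def e2_frame_def aff_frame_def Let_def by blast
qed

end
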